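(* Let $n > m \ge 1$ be integers and let $w = (w_1, \ldots, w_n) \in \mathbb{R}^n$ be a vector of responses, ordered so that units $1, \ldots, m$ are those originally assigned to treatment and units $m+1, \ldots, n$ are those originally assigned to control. A treatment assignment is a vector $\sigma \in \{0,1\}^n$ with exactly $m$ entries equal to $1$ ($\sigma_j = 1$ meaning unit $j$ is assigned to treatment). For $\eta \in \mathbb{R}$ and such an assignment $\sigma$, define $$T_\eta(w, \sigma) := \frac{1}{m}\sum_{j:\sigma_j = 1} \bigl(w_j + \eta \mathbf{1}_{j > m}\bigr) - \frac{1}{n-m}\sum_{j:\sigma_j = 0} \bigl(w_j - \eta \mathbf{1}_{j \le m}\bigr).$$ Let $\sigma_0 = (1, \ldots, 1, 0, \ldots, 0)$ (first $m$ entries equal to $1$) be the original assignment, let $N \ge 1$, and let $\sigma_1, \ldots, \sigma_N$ be any fixed treatment assignments. Define $$P_\eta := \frac{1 + \sum_{j=1}^N \mathbf{1}\{T_\eta(w, \sigma_j) \ge T_\eta(w, \sigma_0)\}}{1 + N}.$$ Then $P_\eta$ is monotonically nondecreasing in $\eta$: for all real $\eta_1 \le \eta_2$, $P_{\eta_1} \le P_{\eta_2}$.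
   Context: This is the two-sample shift problem: under the hypothesized shift $\eta$, a unit originally treated but reassigned to control would have response lower by $\eta$, and a unit originally in control but reassigned to treatment would have response higher by $\eta$; $T_\eta$ is the difference between the treatment-group mean and control-group mean of these adjusted responses. $P_\eta$ is the Monte Carlo randomization $P$-value for the hypothesis that the shift equals $\eta$, computed with the same data $w$ and the same sampled assignments $\sigma_1,\ldots,\sigma_N$ for every $\eta$. *)

theory Defs
  imports Main Complex_Main
begin

definition is_assignment :: "nat \<Rightarrow> nat \<Rightarrow> (nat \<Rightarrow> bool) \<Rightarrow> bool" where
  "is_assignment n m \<sigma> \<longleftrightarrow> card {j \<in> {1..n}. \<sigma> j} = m"

definition T_stat :: "nat \<Rightarrow> nat \<Rightarrow> real \<Rightarrow> (nat \<Rightarrow> real) \<Rightarrow> (nat \<Rightarrow> bool) \<Rightarrow> real" where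
  "T_stat n m \<eta> w \<sigma> =
     (\<Sum>j\<in>{j \<in> {1..n}. \<sigma> j}. w j + (if j > m then \<eta> else 0)) / real m
   - (\<Sum>j\<in>{j \<in> {1..n}. \<not> \<sigma> j}. w j - (if j \<le> m then \<eta> else 0)) / real (n - m)"

definition orig_assignment :: "nat \<Rightarrow> (nat \<Rightarrow> bool)" where
  "orig_assignment m = (\<lambda>j. j \<le> m)"

definition P_val :: "nat \<Rightarrow> nat \<Rightarrow> nat \<Rightarrow> real \<Rightarrow> (nat \<Rightarrow> real) \<Rightarrow> (nat \<Rightarrow> nat \<Rightarrow> bool) \<Rightarrow> real" where
  "P_val n m N \<eta> w sig =
     (1 + real (card {i \<in> {1..N}. T_stat n m \<eta> w (sig i) \<ge> T_stat n m \<eta> w (orig_assignment m)}))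
     / (1 + real N)"

end

theory Submission
  imports Defs
begin

text \<open>Only units that change group feel the shift: \<open>T\<^sub>\<eta>(w, \<sigma>) = T\<^sub>0(w, \<sigma>) + \<eta> c(\<sigma>)\<close>,
  where \<open>c(\<sigma>) \<ge> 0\<close> counts the control units moved to treatment with weight \<open>1/m\<close> and the
  treated units moved to control with weight \<open>1/(n - m)\<close>. Since \<open>c(\<sigma>\<^sub>0) = 0\<close>, the difference
  \<open>T\<^sub>\<eta>(w, \<sigma>) - T\<^sub>\<eta>(w, \<sigma>\<^sub>0)\<close> is nondecreasing in \<open>\<eta>\<close>, so every indicator in the numerator
  of \<open>P\<^sub>\<eta>\<close> is. No property of the sampled assignments is needed.\<close>

lemma sum_if_const_eq_card:
  "finite A \<Longrightarrow> (\<Sum>j\<in>A. if P j then c else 0) = c * of_nat (card {j \<in> A. P j})"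
  by (simp add: sum.inter_filter[symmetric] mult_of_nat_commute)

definition switch_weight :: "nat \<Rightarrow> nat \<Rightarrow> (nat \<Rightarrow> bool) \<Rightarrow> real" where
  "switch_weight n m \<sigma> =
     real (card {j \<in> {1..n}. \<sigma> j \<and> j > m}) / real m
   + real (card {j \<in> {1..n}. \<not> \<sigma> j \<and> j \<le> m}) / real (n - m)"

lemma switch_weight_nonneg: "switch_weight n m \<sigma> \<ge> 0"
  by (simp add: switch_weight_def)

lemma switch_weight_orig_assignment: "switch_weight n m (orig_assignment m) = 0"
  by (simp add: switch_weight_def orig_assignment_def)

lemma T_stat_eq_shift:
  "T_stat n m \<eta> w \<sigma> = T_stat n m 0 w \<sigma> + \<eta> * switch_weight n m \<sigma>"
proof -
  have treated: "(\<Sum>j\<in>{j \<in> {1..n}. \<sigma> j}. w j + (if j > m then \<eta> else 0))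
      = (\<Sum>j\<in>{j \<in> {1..n}. \<sigma> j}. w j) + \<eta> * real (card {j \<in> {1..n}. \<sigma> j \<and> j > m})"
    by (simp add: sum.distrib sum_if_const_eq_card conj_commute conj_left_commute)
  have control: "(\<Sum>j\<in>{j \<in> {1..n}. \<not> \<sigma> j}. w j - (if j \<le> m then \<eta> else 0))
      = (\<Sum>j\<in>{j \<in> {1..n}. \<not> \<sigma> j}. w j) - \<eta> * real (card {j \<in> {1..n}. \<not> \<sigma> j \<and> j \<le> m})"
    by (simp add: sum_subtractf sum_if_const_eq_card conj_commute conj_left_commute)
  have unshifted: "T_stat n m 0 w \<sigma>
      = (\<Sum>j\<in>{j \<in> {1..n}. \<sigma> j}. w j) / real m - (\<Sum>j\<in>{j \<in> {1..n}. \<not> \<sigma> j}. w j) / real (n - m)"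
    by (simp add: T_stat_def)
  show ?thesis
    unfolding T_stat_def[of n m \<eta>] switch_weight_def treated control unshifted
    by (simp add: add_divide_distrib diff_divide_distrib distrib_left)
qed

lemma T_stat_diff_orig_mono:
  assumes "\<eta>1 \<le> \<eta>2"
  shows "T_stat n m \<eta>1 w \<sigma> - T_stat n m \<eta>1 w (orig_assignment m)
       \<le> T_stat n m \<eta>2 w \<sigma> - T_stat n m \<eta>2 w (orig_assignment m)"
proof -
  have diff_eq: "T_stat n m \<eta> w \<sigma> - T_stat n m \<eta> w (orig_assignment m)
      = T_stat n m 0 w \<sigma> - T_stat n m 0 w (orig_assignment m) + \<eta> * switch_weight n m \<sigma>" for \<eta>
    unfolding T_stat_eq_shift[of n m \<eta> w \<sigma>] T_stat_eq_shift[of n m \<eta> w "orig_assignment m"]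
      switch_weight_orig_assignment
    by simp
  have "\<eta>1 * switch_weight n m \<sigma> \<le> \<eta>2 * switch_weight n m \<sigma>"
    using assms switch_weight_nonneg by (rule mult_right_mono)
  then show ?thesis
    unfolding diff_eq[of \<eta>1] diff_eq[of \<eta>2] by simp
qed

lemma P_val_mono:
  assumes "\<eta>1 \<le> \<eta>2"
  shows "P_val n m N \<eta>1 w sig \<le> P_val n m N \<eta>2 w sig"
proof -
  let ?exceed = "\<lambda>\<eta>. {i \<in> {1..N}. T_stat n m \<eta> w (sig i) \<ge> T_stat n m \<eta> w (orig_assignment m)}"
  have "T_stat n m \<eta>2 w (orig_assignment m) \<le> T_stat n m \<eta>2 w (sig i)"
    if "T_stat n m \<eta>1 w (orig_assignment m) \<le> T_stat n m \<eta>1 w (sig i)" for i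
    using T_stat_diff_orig_mono[OF assms, of n m w "sig i"] that by linarith
  then have "?exceed \<eta>1 \<subseteq> ?exceed \<eta>2"
    by auto
  then have "card (?exceed \<eta>1) \<le> card (?exceed \<eta>2)"
    by (intro card_mono) simp_all
  then show ?thesis
    unfolding P_val_def by (simp add: divide_right_mono)
qed

theorem mainTheorem1:
  fixes n m N :: nat and w :: "nat \<Rightarrow> real" and sig :: "nat \<Rightarrow> nat \<Rightarrow> bool"
    and \<eta>1 \<eta>2 :: real
  assumes "1 \<le> m" and "m < n" and "1 \<le> N"
    and "\<And>i. i \<in> {1..N} \<Longrightarrow> is_assignment n m (sig i)"
    and "\<eta>1 \<le> \<eta>2"
  shows "P_val n m N \<eta>1 w sig \<le> P_val n m N \<eta>2 w sig"
  using assms(5) by (rule P_val_mono)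

end
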